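(* Let $n\geq 2$, and let $0<x_1<\cdots<x_n$ and $0<y_1<\cdots<y_n$ be real numbers. Let $S=[1+x_iy_j]_{i,j=1}^n$. For $2\leq i\leq n$ let \[ \alpha_i=\frac{1+y_1x_i}{1+y_1x_{i-1}},\qquad \alpha_i'=\frac{1+x_1y_i}{1+x_1y_{i-1}}, \] and for $3\leq j\leq n$ let \[ \beta_j=\frac{(x_j-x_{j-1})(1+y_1x_{j-2})}{(x_{j-1}-x_{j-2})(1+y_1x_{j-1})},\qquad \beta_j'=\frac{(y_j-y_{j-1})(1+x_1y_{j-2})}{(y_{j-1}-y_{j-2})(1+x_1y_{j-1})}. \] Let $D$ be the $n\times n$ diagonal matrix with $D_{11}=1+x_1y_1$, $D_{22}=\dfrac{(x_2-x_1)(y_2-y_1)}{1+x_1y_1}$, and $D_{kk}=0$ for $3\leq k\leq n$. Then \[ S=\big(L_n(\alpha_n)\cdots L_2(\alpha_2)\big)\big(L_n(\beta_n)\cdots L_3(\beta_3)\big)\,D\,\big(U_3(\beta_3')\cdots U_n(\beta_n')\big)\big(U_2(\alpha_2')\cdots U_n(\alpha_n')\big). \]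
   Context: For a real number $s$ and $2\leq i\leq n$, $L_i(s)$ denotes the $n\times n$ matrix with all diagonal entries equal to $1$, $(i,i-1)$ entry equal to $s$, and all other entries zero; $U_i(s)$ denotes the $n\times n$ matrix with all diagonal entries equal to $1$, $(i-1,i)$ entry equal to $s$, and all other entries zero (elementary bidiagonal matrices). Empty products (e.g. when $n=2$) are the identity matrix. *)

theory Defs
  imports "Jordan_Normal_Form.Matrix"
begin

text \<open>The elementary
bidiagonal matrices use the paper's 1-based index i (2 <= i <= n):
L_i(s) has entry s at 1-based position (i,i-1), i.e. 0-based (i-1,i-2);
U_i(s) has entry s at 1-based position (i-1,i), i.e. 0-based (i-2,i-1).\<close>

definition Lmat :: "nat \<Rightarrow> nat \<Rightarrow> real \<Rightarrow> real mat" where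
  "Lmat n i s = mat n n (\<lambda>(r, c). if r = c then 1 else if r + 1 = i \<and> c + 2 = i then s else 0)"

definition Umat :: "nat \<Rightarrow> nat \<Rightarrow> real \<Rightarrow> real mat" where
  "Umat n i s = mat n n (\<lambda>(r, c). if r = c then 1 else if r + 2 = i \<and> c + 1 = i then s else 0)"

definition mprod :: "nat \<Rightarrow> real mat list \<Rightarrow> real mat" where
  "mprod n Ms = foldr (*) Ms (1\<^sub>m n)"

end

theory Submission
  imports Defs
begin

text \<open>As \<open>D\<close> has only two nonzero entries, entry \<open>(r, c)\<close> of the right-hand side is
\<open>P\<^sub>r\<^sub>0 D\<^sub>0\<^sub>0 Q\<^sub>c\<^sub>0 + P\<^sub>r\<^sub>1 D\<^sub>1\<^sub>1 Q\<^sub>c\<^sub>1\<close>. Here \<open>P\<close> is the product of the \<open>L\<close>-factors, built from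
\<open>(y 1, x)\<close>, and the product of the \<open>U\<close>-factors is \<open>Q\<^sup>T\<close>, where \<open>Q\<close> is the same product built
from \<open>(x 1, y)\<close>. Since \<open>L\<^sub>i(s)\<close> just adds \<open>s\<close> times entry \<open>i - 1\<close> to entry \<open>i\<close>, a product of
such factors acts on a vector by a first-order recurrence. Solving it for the first two unit
vectors shows that the first two columns of \<open>P\<close> are \<open>(1 + y 1 * x (r + 1)) / (1 + y 1 * x 1)\<close>
and \<open>(x (r + 1) - x 1) / (x 2 - x 1)\<close>. What remains is the identity
\<open>(1 + y\<^sub>1 x\<^sub>r)(1 + x\<^sub>1 y\<^sub>c) + (x\<^sub>r - x\<^sub>1)(y\<^sub>c - y\<^sub>1) = (1 + x\<^sub>1 y\<^sub>1)(1 + x\<^sub>r y\<^sub>c)\<close>.\<close>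

lemma increasing_ge_first:
  fixes x :: "nat \<Rightarrow> 'a::order"
  assumes "\<forall>i\<in>{1..<n}. x i < x (Suc i)" "1 \<le> i" "i \<le> n"
  shows "x 1 \<le> x i"
  using assms(2)
proof (induction i rule: dec_induct)
  case (step k)
  then have "x k < x (Suc k)"
    using assms(1,3) by simp
  with step.IH show ?case
    by (meson order.trans less_imp_le)
qed simp

lemma Lmat_carrier [simp]: "Lmat n i s \<in> carrier_mat n n"
  by (simp add: Lmat_def)

lemma Umat_eq_transpose_Lmat: "Umat n i s = transpose_mat (Lmat n i s)"
  by (rule eq_matI) (auto simp: Umat_def Lmat_def)

lemma mprod_Cons: "mprod n (M # Ms) = M * mprod n Ms"
  by (simp add: mprod_def)

lemma mprod_carrier: "set Ms \<subseteq> carrier_mat n n \<Longrightarrow> mprod n Ms \<in> carrier_mat n n"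
  by (induction Ms) (auto simp: mprod_def)

lemma mprod_Lmat_carrier [simp]: "mprod n (map (\<lambda>i. Lmat n i (a i)) is) \<in> carrier_mat n n"
  by (rule mprod_carrier) auto

lemma mprod_Umat_carrier [simp]: "mprod n (map (\<lambda>i. Umat n i (a i)) is) \<in> carrier_mat n n"
  by (rule mprod_carrier) (auto simp: Umat_def)

lemma mprod_append:
  assumes "set Ms \<subseteq> carrier_mat n n" "set Ns \<subseteq> carrier_mat n n"
  shows "mprod n (Ms @ Ns) = mprod n Ms * mprod n Ns"
  using assms(1)
proof (induction Ms)
  case Nil
  then show ?case using mprod_carrier[OF assms(2)] by (simp add: mprod_def)
next
  case (Cons M Ms)
  then have "M \<in> carrier_mat n n" "mprod n Ms \<in> carrier_mat n n"
    using mprod_carrier by auto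
  then show ?case
    using Cons mprod_carrier[OF assms(2)] by (simp add: mprod_Cons)
qed

lemma transpose_mprod:
  "set Ms \<subseteq> carrier_mat n n \<Longrightarrow> transpose_mat (mprod n Ms) = mprod n (rev (map transpose_mat Ms))"
proof (induction Ms)
  case Nil
  then show ?case by (simp add: mprod_def)
next
  case (Cons M Ms)
  then have M: "M \<in> carrier_mat n n" and Ms: "set Ms \<subseteq> carrier_mat n n"
    by auto
  have "transpose_mat (mprod n (M # Ms)) = transpose_mat (mprod n Ms) * transpose_mat M"
    using M mprod_carrier[OF Ms] by (simp add: mprod_Cons transpose_mult)
  also have "\<dots> = mprod n (rev (map transpose_mat Ms) @ [transpose_mat M])"
    using Cons M Ms by (subst mprod_append) (auto simp: mprod_def)
  finally show ?case by simp
qed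

lemma transpose_mprod_Lmat:
  "transpose_mat (mprod n (map (\<lambda>i. Lmat n i (a i)) (rev is))) = mprod n (map (\<lambda>i. Umat n i (a i)) is)"
  by (subst transpose_mprod) (auto simp: rev_map comp_def Umat_eq_transpose_Lmat)

lemma col_eq_mult_unit_vec:
  fixes A :: "'a::semiring_1 mat"
  shows "A \<in> carrier_mat m n \<Longrightarrow> j < n \<Longrightarrow> col A j = A *\<^sub>v unit_vec n j"
  using col_mult2[of A m n "1\<^sub>m n" n j] right_mult_one_mat[of A m n] by simp

lemma index_mult_mat_diag_transpose:
  assumes "A \<in> carrier_mat m n" "B \<in> carrier_mat p n" "r < m" "c < p"
  shows "(A * mat_diag n d * transpose_mat B) $$ (r, c) = (\<Sum>k<n. A $$ (r, k) * d k * B $$ (c, k))"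
  using assms by (simp add: mat_diag_mult_right scalar_prod_def lessThan_atLeast0)

lemma Lmat_mult_vec:
  assumes "v \<in> carrier_vec n"
  shows "Lmat n i s *\<^sub>v v = vec n (\<lambda>k. if k + 1 = i \<and> 1 \<le> k then v $ k + s * v $ (k - 1) else v $ k)"
proof (rule eq_vecI)
  fix k assume "k < dim_vec (vec n (\<lambda>k. if k + 1 = i \<and> 1 \<le> k then v $ k + s * v $ (k - 1) else v $ k))"
  then have k: "k < n" by simp
  have "(Lmat n i s *\<^sub>v v) $ k = (\<Sum>j<n. (if k = j then 1 else if k + 1 = i \<and> j + 2 = i then s else 0) * v $ j)"
    using assms k by (simp add: Lmat_def scalar_prod_def lessThan_atLeast0)
  also have "\<dots> = (\<Sum>j<n. (if j = k then v $ j else 0) + (if k + 1 = i \<and> 1 \<le> k \<and> j = k - 1 then s * v $ j else 0))"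
    by (rule sum.cong) auto
  also have "\<dots> = (if k + 1 = i \<and> 1 \<le> k then v $ k + s * v $ (k - 1) else v $ k)"
    using k by (auto simp: sum.distrib)
  finally show "(Lmat n i s *\<^sub>v v) $ k = vec n (\<lambda>k. if k + 1 = i \<and> 1 \<le> k then v $ k + s * v $ (k - 1) else v $ k) $ k"
    using k by simp
qed (use assms in \<open>simp add: Lmat_def\<close>)

text \<open>The factors are applied right to left, \<open>L\<^sub>q\<close> first, so when \<open>L\<^sub>k\<^sub>+\<^sub>1\<close> updates entry \<open>k\<close>
(0-based) it sees the already updated entry \<open>k - 1\<close>: hence \<open>f (k - 1)\<close>, not \<open>v $ (k - 1)\<close>.\<close>

lemma mprod_Lmat_mult_vec:
  assumes "2 \<le> q" and v: "v \<in> carrier_vec n"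
    and rec: "\<And>k. k < n \<Longrightarrow> f k = (if q \<le> Suc k \<and> k < m then v $ k + a (Suc k) * f (k - 1) else v $ k)"
  shows "mprod n (map (\<lambda>i. Lmat n i (a i)) (rev [q..<Suc m])) *\<^sub>v v = vec n f"
  using rec
proof (induction m arbitrary: f)
  case 0
  have "vec n f = v"
  proof (rule eq_vecI)
    fix k assume "k < dim_vec v"
    then show "vec n f $ k = v $ k" using "0.prems"[of k] v by simp
  qed (use v in simp)
  then show ?case using v \<open>2 \<le> q\<close> by (simp add: mprod_def)
next
  case (Suc m)
  show ?case
  proof (cases "q \<le> Suc m")
    case False
    have "vec n f = v"
    proof (rule eq_vecI)
      fix k assume "k < dim_vec v"
      then show "vec n f $ k = v $ k" using Suc.prems[of k] False v by simp
    qed (use v in simp)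
    then show ?thesis using False v by (simp add: mprod_def)
  next
    case True
    define f' where "f' k = (if k = m then v $ k else f k)" for k
    have "mprod n (map (\<lambda>i. Lmat n i (a i)) (rev [q..<Suc m])) *\<^sub>v v = vec n f'"
    proof (rule Suc.IH)
      fix k assume k: "k < n"
      show "f' k = (if q \<le> Suc k \<and> k < m then v $ k + a (Suc k) * f' (k - 1) else v $ k)"
        using Suc.prems[OF k] k by (auto simp: f'_def)
    qed
    moreover have "Lmat n (Suc m) (a (Suc m)) *\<^sub>v vec n f' = vec n f"
    proof (rule eq_vecI)
      fix k assume "k < dim_vec (vec n f)"
      then have k: "k < n" by simp
      show "(Lmat n (Suc m) (a (Suc m)) *\<^sub>v vec n f') $ k = vec n f $ k"
        using Suc.prems[OF k] k True \<open>2 \<le> q\<close> by (auto simp: Lmat_mult_vec f'_def)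
    qed (simp add: Lmat_def)
    moreover have "rev [q..<Suc (Suc m)] = Suc m # rev [q..<Suc m]"
      using True by simp
    ultimately show ?thesis
      using assoc_mult_mat_vec[OF Lmat_carrier mprod_Lmat_carrier v]
      by (simp add: mprod_Cons del: upt_Suc)
  qed
qed

definition alpha_factor :: "nat \<Rightarrow> real \<Rightarrow> (nat \<Rightarrow> real) \<Rightarrow> real mat" where
  "alpha_factor n t x =
     mprod n (map (\<lambda>i. Lmat n i ((1 + t * x i) / (1 + t * x (i - 1)))) (rev [2..<Suc n]))"

definition beta_factor :: "nat \<Rightarrow> real \<Rightarrow> (nat \<Rightarrow> real) \<Rightarrow> real mat" where
  "beta_factor n t x =
     mprod n (map (\<lambda>j. Lmat n j (((x j - x (j - 1)) * (1 + t * x (j - 2))) /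
                                   ((x (j - 1) - x (j - 2)) * (1 + t * x (j - 1))))) (rev [3..<Suc n]))"

definition lower_factor :: "nat \<Rightarrow> real \<Rightarrow> (nat \<Rightarrow> real) \<Rightarrow> real mat" where
  "lower_factor n t x = alpha_factor n t x * beta_factor n t x"

lemma lower_factor_carrier: "lower_factor n t x \<in> carrier_mat n n"
  unfolding lower_factor_def alpha_factor_def beta_factor_def
  by (rule mult_carrier_mat[OF mprod_Lmat_carrier mprod_Lmat_carrier])

lemma dim_lower_factor [simp]: "dim_row (lower_factor n t x) = n" "dim_col (lower_factor n t x) = n"
  using lower_factor_carrier[of n t x] by auto

lemma transpose_lower_factor:
  "transpose_mat (lower_factor n t x) =
     mprod n (map (\<lambda>j. Umat n j (((x j - x (j - 1)) * (1 + t * x (j - 2))) /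
                                   ((x (j - 1) - x (j - 2)) * (1 + t * x (j - 1))))) [3..<Suc n])
   * mprod n (map (\<lambda>i. Umat n i ((1 + t * x i) / (1 + t * x (i - 1)))) [2..<Suc n])"
  unfolding lower_factor_def alpha_factor_def beta_factor_def
    transpose_mult[OF mprod_Lmat_carrier mprod_Lmat_carrier] transpose_mprod_Lmat ..

lemma beta_factor_mult_unit_vec_0: "beta_factor n t x *\<^sub>v unit_vec n 0 = unit_vec n 0"
  unfolding beta_factor_def unit_vec_def by (rule mprod_Lmat_mult_vec) auto

lemma alpha_factor_mult_unit_vec_0:
  fixes x :: "nat \<Rightarrow> real"
  assumes nz: "\<forall>i\<in>{1..n}. 1 + t * x i \<noteq> 0"
  shows "alpha_factor n t x *\<^sub>v unit_vec n 0 = vec n (\<lambda>r. (1 + t * x (Suc r)) / (1 + t * x 1))"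
  unfolding alpha_factor_def
proof (rule mprod_Lmat_mult_vec)
  fix k assume "k < n"
  then show "(1 + t * x (Suc k)) / (1 + t * x 1) = (if 2 \<le> Suc k \<and> k < n
    then unit_vec n 0 $ k + (1 + t * x (Suc k)) / (1 + t * x (Suc k - 1))
                            * ((1 + t * x (Suc (k - 1))) / (1 + t * x 1))
    else unit_vec n 0 $ k)"
    using bspec[OF nz, of 1] bspec[OF nz, of k] by (cases k) auto
qed auto

definition beta_column :: "real \<Rightarrow> (nat \<Rightarrow> real) \<Rightarrow> nat \<Rightarrow> real" where
  "beta_column t x r =
     (if r = 0 then 0 else (x (Suc r) - x r) * (1 + t * x 1) / ((x 2 - x 1) * (1 + t * x r)))"

lemma beta_factor_mult_unit_vec_1:
  fixes x :: "nat \<Rightarrow> real"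
  assumes "2 \<le> n" and nz: "\<forall>i\<in>{1..n}. 1 + t * x i \<noteq> 0" and inj: "\<forall>i\<in>{1..<n}. x i \<noteq> x (Suc i)"
  shows "beta_factor n t x *\<^sub>v unit_vec n 1 = vec n (beta_column t x)"
  unfolding beta_factor_def
proof (rule mprod_Lmat_mult_vec)
  have "x 2 \<noteq> x 1" "1 + t * x 1 \<noteq> 0"
    using bspec[OF inj, of 1] bspec[OF nz, of 1] \<open>2 \<le> n\<close> by (auto simp: numeral_2_eq_2)
  fix k assume k: "k < n"
  show "beta_column t x k =
    (if 3 \<le> Suc k \<and> k < n
     then unit_vec n 1 $ k + (x (Suc k) - x (Suc k - 1)) * (1 + t * x (Suc k - 2)) /
            ((x (Suc k - 1) - x (Suc k - 2)) * (1 + t * x (Suc k - 1))) * beta_column t x (k - 1)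
     else unit_vec n 1 $ k)"
  proof (cases "2 \<le> k")
    case True
    then obtain j where j: "k = Suc j" "1 \<le> j" by (cases k) auto
    have "1 + t * x j \<noteq> 0" "1 + t * x (Suc j) \<noteq> 0" "x j \<noteq> x (Suc j)"
      using bspec[OF nz, of j] bspec[OF nz, of "Suc j"] bspec[OF inj, of j] j k by auto
    then show ?thesis
      using True j k \<open>x 2 \<noteq> x 1\<close> by (simp add: beta_column_def)
  next
    case False
    then have "k = 0 \<or> k = 1" by auto
    then show ?thesis
      using k \<open>x 2 \<noteq> x 1\<close> \<open>1 + t * x 1 \<noteq> 0\<close> \<open>2 \<le> n\<close>
      by (auto simp: beta_column_def numeral_2_eq_2)
  qed
qed simp_all

lemma alpha_factor_mult_beta_column:
  fixes x :: "nat \<Rightarrow> real"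
  assumes nz: "\<forall>i\<in>{1..n}. 1 + t * x i \<noteq> 0" and "x 2 \<noteq> x 1"
  shows "alpha_factor n t x *\<^sub>v vec n (beta_column t x)
         = vec n (\<lambda>r. (x (Suc r) - x 1) / (x 2 - x 1))"
  unfolding alpha_factor_def
proof (rule mprod_Lmat_mult_vec)
  fix k assume k: "k < n"
  show "(x (Suc k) - x 1) / (x 2 - x 1) = (if 2 \<le> Suc k \<and> k < n
    then vec n (beta_column t x) $ k
         + (1 + t * x (Suc k)) / (1 + t * x (Suc k - 1)) * ((x (Suc (k - 1)) - x 1) / (x 2 - x 1))
    else vec n (beta_column t x) $ k)"
  proof (cases k)
    case 0
    then show ?thesis using k by (simp add: beta_column_def)
  next
    case (Suc j)
    have "1 + t * x (Suc j) \<noteq> 0"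
      using bspec[OF nz, of "Suc j"] Suc k by auto
    moreover have "(x (Suc (Suc j)) - x 1) * (1 + t * x (Suc j))
        = (x (Suc (Suc j)) - x (Suc j)) * (1 + t * x 1) + (1 + t * x (Suc (Suc j))) * (x (Suc j) - x 1)"
      by (simp add: algebra_simps)
    ultimately show ?thesis
      using Suc k \<open>x 2 \<noteq> x 1\<close> by (simp add: beta_column_def divide_simps)
  qed
qed simp_all

lemma index_lower_factor:
  fixes x :: "nat \<Rightarrow> real"
  assumes "2 \<le> n" and nz: "\<forall>i\<in>{1..n}. 1 + t * x i \<noteq> 0" and inj: "\<forall>i\<in>{1..<n}. x i \<noteq> x (Suc i)"
    and "r < n"
  shows "lower_factor n t x $$ (r, 0) = (1 + t * x (Suc r)) / (1 + t * x 1)"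
    and "lower_factor n t x $$ (r, 1) = (x (Suc r) - x 1) / (x 2 - x 1)"
proof -
  have column: "lower_factor n t x $$ (r, j) = (alpha_factor n t x *\<^sub>v (beta_factor n t x *\<^sub>v unit_vec n j)) $ r"
    if "j < n" for j
  proof -
    have "lower_factor n t x $$ (r, j) = col (lower_factor n t x) j $ r"
      using that \<open>r < n\<close> by simp
    also have "\<dots> = (lower_factor n t x *\<^sub>v unit_vec n j) $ r"
      unfolding col_eq_mult_unit_vec[OF lower_factor_carrier that] ..
    also have "\<dots> = (alpha_factor n t x *\<^sub>v (beta_factor n t x *\<^sub>v unit_vec n j)) $ r"
      unfolding lower_factor_def alpha_factor_def beta_factor_def
      by (subst assoc_mult_mat_vec[OF mprod_Lmat_carrier mprod_Lmat_carrier]) simp_all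
    finally show ?thesis .
  qed
  have "x 2 \<noteq> x 1"
    using bspec[OF inj, of 1] \<open>2 \<le> n\<close> by (auto simp: numeral_2_eq_2)
  moreover have "1 < n" "0 < n"
    using \<open>2 \<le> n\<close> by simp_all
  ultimately show "lower_factor n t x $$ (r, 1) = (x (Suc r) - x 1) / (x 2 - x 1)"
    and "lower_factor n t x $$ (r, 0) = (1 + t * x (Suc r)) / (1 + t * x 1)"
    unfolding column[OF \<open>1 < n\<close>] column[OF \<open>0 < n\<close>]
      beta_factor_mult_unit_vec_1[OF assms(1-3)] alpha_factor_mult_beta_column[OF nz \<open>x 2 \<noteq> x 1\<close>]
      beta_factor_mult_unit_vec_0 alpha_factor_mult_unit_vec_0[OF nz]
    using \<open>r < n\<close> by simp_all
qed

lemma mat_one_plus_xy_factorization: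
  fixes x y :: "nat \<Rightarrow> real"
  assumes "2 \<le> n"
    and x: "\<forall>i\<in>{1..n}. 1 + y 1 * x i \<noteq> 0" "\<forall>i\<in>{1..<n}. x i \<noteq> x (Suc i)"
    and y: "\<forall>i\<in>{1..n}. 1 + x 1 * y i \<noteq> 0" "\<forall>i\<in>{1..<n}. y i \<noteq> y (Suc i)"
  shows "mat n n (\<lambda>(i, j). 1 + x (i + 1) * y (j + 1)) =
    lower_factor n (y 1) x
    * mat_diag n (\<lambda>k. if k = 0 then 1 + x 1 * y 1
                      else if k = 1 then (x 2 - x 1) * (y 2 - y 1) / (1 + x 1 * y 1)
                      else 0)
    * transpose_mat (lower_factor n (x 1) y)" (is "_ = ?L * mat_diag n ?d * transpose_mat ?R")
proof (rule eq_matI)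
  fix r c assume "r < dim_row (?L * mat_diag n ?d * transpose_mat ?R)"
    and "c < dim_col (?L * mat_diag n ?d * transpose_mat ?R)"
  then have r: "r < n" and c: "c < n"
    by simp_all
  have "(?L * mat_diag n ?d * transpose_mat ?R) $$ (r, c) = (\<Sum>k<n. ?L $$ (r, k) * ?d k * ?R $$ (c, k))"
    using r c by (rule index_mult_mat_diag_transpose[OF lower_factor_carrier lower_factor_carrier])
  also have "\<dots> = (\<Sum>k\<in>{0, 1}. ?L $$ (r, k) * ?d k * ?R $$ (c, k))"
    using \<open>2 \<le> n\<close> by (intro sum.mono_neutral_right) auto
  also have "\<dots> = ?L $$ (r, 0) * ?d 0 * ?R $$ (c, 0) + ?L $$ (r, 1) * ?d 1 * ?R $$ (c, 1)"
    by simp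
  also have "\<dots> = (1 + y 1 * x (Suc r)) / (1 + y 1 * x 1) * (1 + x 1 * y 1) * ((1 + x 1 * y (Suc c)) / (1 + x 1 * y 1))
      + (x (Suc r) - x 1) / (x 2 - x 1) * ((x 2 - x 1) * (y 2 - y 1) / (1 + x 1 * y 1)) * ((y (Suc c) - y 1) / (y 2 - y 1))"
    unfolding index_lower_factor[OF \<open>2 \<le> n\<close> x r] index_lower_factor[OF \<open>2 \<le> n\<close> y c] by simp
  also have "\<dots> = 1 + x (r + 1) * y (c + 1)"
  proof -
    have "1 + x 1 * y 1 \<noteq> 0" "x 2 - x 1 \<noteq> 0" "y 2 - y 1 \<noteq> 0"
      using bspec[OF x(1), of 1] bspec[OF x(2), of 1] bspec[OF y(2), of 1] \<open>2 \<le> n\<close>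
      by (simp_all add: numeral_2_eq_2 mult.commute)
    then show ?thesis
      by (simp add: divide_simps mult.commute) (simp add: algebra_simps)
  qed
  finally show "mat n n (\<lambda>(i, j). 1 + x (i + 1) * y (j + 1)) $$ (r, c)
      = (?L * mat_diag n ?d * transpose_mat ?R) $$ (r, c)"
    using r c by simp
qed simp_all

theorem theorem2p2:
  fixes n :: nat and x y :: "nat \<Rightarrow> real"
  assumes "n \<ge> 2"
    and "0 < x 1" and "\<forall>i\<in>{1..<n}. x i < x (Suc i)"
    and "0 < y 1" and "\<forall>i\<in>{1..<n}. y i < y (Suc i)"
  shows
   "let S = mat n n (\<lambda>(i, j). 1 + x (i + 1) * y (j + 1));
        \<alpha> = (\<lambda>i. (1 + y 1 * x i) / (1 + y 1 * x (i - 1)));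
        \<alpha>' = (\<lambda>i. (1 + x 1 * y i) / (1 + x 1 * y (i - 1)));
        \<beta> = (\<lambda>j. ((x j - x (j - 1)) * (1 + y 1 * x (j - 2))) /
                  ((x (j - 1) - x (j - 2)) * (1 + y 1 * x (j - 1))));
        \<beta>' = (\<lambda>j. ((y j - y (j - 1)) * (1 + x 1 * y (j - 2))) /
                  ((y (j - 1) - y (j - 2)) * (1 + x 1 * y (j - 1))));
        D = mat_diag n (\<lambda>k. if k = 0 then 1 + x 1 * y 1
                            else if k = 1 then (x 2 - x 1) * (y 2 - y 1) / (1 + x 1 * y 1)
                            else 0)
    in S = mprod n (map (\<lambda>i. Lmat n i (\<alpha> i)) (rev [2..<Suc n]))
         * mprod n (map (\<lambda>j. Lmat n j (\<beta> j)) (rev [3..<Suc n]))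
         * D
         * mprod n (map (\<lambda>j. Umat n j (\<beta>' j)) [3..<Suc n])
         * mprod n (map (\<lambda>i. Umat n i (\<alpha>' i)) [2..<Suc n])"
proof -
  have "0 < x i" "0 < y i" if "1 \<le> i" "i \<le> n" for i
    using increasing_ge_first[OF assms(3) that] increasing_ge_first[OF assms(5) that] assms(2,4)
    by linarith+
  then have nondegenerate: "\<forall>i\<in>{1..n}. 1 + y 1 * x i \<noteq> 0" "\<forall>i\<in>{1..<n}. x i \<noteq> x (Suc i)"
    "\<forall>i\<in>{1..n}. 1 + x 1 * y i \<noteq> 0" "\<forall>i\<in>{1..<n}. y i \<noteq> y (Suc i)"
    using assms(2-5) by (auto simp: add_pos_pos less_imp_neq less_imp_neq[symmetric])
  show ?thesis
    unfolding Let_def alpha_factor_def[symmetric] beta_factor_def[symmetric] lower_factor_def[symmetric]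
      mat_one_plus_xy_factorization[where x = x and y = y, OF assms(1) nondegenerate] transpose_lower_factor
    by (rule assoc_mult_mat[symmetric, OF mult_carrier_mat[OF lower_factor_carrier mat_diag_dim]
          mprod_Umat_carrier mprod_Umat_carrier])
qed

end
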